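(* There exists a set $A\subseteq\omega^\omega$ (e.g. $A=\{\bar 0\}$, the singleton of the all-zero sequence) such that both $A$ and its complement $\omega^\omega\setminus A$ are computably enumerable in Kleene's second model $\mathcal{K}_2$, but $A$ is not decidable in $\mathcal{K}_2$.
   Context: Kleene's second model $\mathcal{K}_2$ is the pca with underlying set $\omega^\omega$ in which $\alpha\cdot\beta$ is the result of applying the continuous (partial) functional coded by $\alpha$ to $\beta$. In a pca $\mathcal{A}$, with $\mathsf{true}=k$ and $\mathsf{false}=ki$ ($i=skk$, where $k,s$ are the standard combinators), a set $A\subseteq\mathcal{A}$ is decidable if there is a total $c\in\mathcal{A}$ with $ca=\mathsf{true}$ iff $a\in A$ and $ca=\mathsf{false}$ iff $a\notin A$; $A$ is computably enumerable (c.e.) in $\mathcal{A}$ if $A=\{a\mid ea\downarrow\}$ for some $e\in\mathcal{A}$. *)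

theory Defs
  imports Main "HOL-Library.Nat_Bijection"
begin

text \<open>A partial applicative structure is given by an application
  app :: 'a => 'a => 'a option  (None = undefined).
  Application of possibly undefined terms (strict, Kleene style):\<close>

definition appo :: "('a \<Rightarrow> 'a \<Rightarrow> 'a option) \<Rightarrow> 'a option \<Rightarrow> 'a option \<Rightarrow> 'a option" where
  "appo app x y = (case x of None \<Rightarrow> None | Some a \<Rightarrow>
                    (case y of None \<Rightarrow> None | Some b \<Rightarrow> app a b))"

definition is_K :: "('a \<Rightarrow> 'a \<Rightarrow> 'a option) \<Rightarrow> 'a \<Rightarrow> bool" where
  "is_K app k \<longleftrightarrow> (\<forall>a b. appo app (appo app (Some k) (Some a)) (Some b) = Some a)"

definition is_S :: "('a \<Rightarrow> 'a \<Rightarrow> 'a option) \<Rightarrow> 'a \<Rightarrow> bool" where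
  "is_S app s \<longleftrightarrow> (\<forall>a b. appo app (appo app (Some s) (Some a)) (Some b) \<noteq> None \<and>
      (\<forall>c. appo app (appo app (appo app (Some s) (Some a)) (Some b)) (Some c) =
           appo app (appo app (Some a) (Some c)) (appo app (Some b) (Some c))))"

definition pca_i :: "('a \<Rightarrow> 'a \<Rightarrow> 'a option) \<Rightarrow> 'a \<Rightarrow> 'a \<Rightarrow> 'a" where
  "pca_i app k s = the (appo app (appo app (Some s) (Some k)) (Some k))"

definition pca_true :: "('a \<Rightarrow> 'a \<Rightarrow> 'a option) \<Rightarrow> 'a \<Rightarrow> 'a \<Rightarrow> 'a" where
  "pca_true app k s = k"

definition pca_false :: "('a \<Rightarrow> 'a \<Rightarrow> 'a option) \<Rightarrow> 'a \<Rightarrow> 'a \<Rightarrow> 'a" where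
  "pca_false app k s = the (app k (pca_i app k s))"

definition pca_decidable :: "('a \<Rightarrow> 'a \<Rightarrow> 'a option) \<Rightarrow> 'a \<Rightarrow> 'a \<Rightarrow> 'a set \<Rightarrow> bool" where
  "pca_decidable app k s A \<longleftrightarrow> (\<exists>c. (\<forall>a. app c a \<noteq> None) \<and>
      (\<forall>a. app c a = Some (pca_true app k s) \<longleftrightarrow> a \<in> A) \<and>
      (\<forall>a. app c a = Some (pca_false app k s) \<longleftrightarrow> a \<notin> A))"

definition pca_ce :: "('a \<Rightarrow> 'a \<Rightarrow> 'a option) \<Rightarrow> 'a set \<Rightarrow> bool" where
  "pca_ce app A \<longleftrightarrow> (\<exists>e. A = {a. app e a \<noteq> None})"

text \<open>Standard definition: with finite sequences coded by list_encode,
  (alpha . beta)(n) = alpha(<n, beta 0, ..., beta (m-1)>) - 1 where m is least with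
  alpha(<n, beta 0, ..., beta (m-1)>) > 0; alpha . beta is defined iff such m
  exists for every n.\<close>

definition K2_code :: "(nat \<Rightarrow> nat) \<Rightarrow> nat \<Rightarrow> nat \<Rightarrow> nat" where
  "K2_code \<beta> n m = list_encode (n # map \<beta> [0..<m])"

definition K2_app :: "(nat \<Rightarrow> nat) \<Rightarrow> (nat \<Rightarrow> nat) \<Rightarrow> (nat \<Rightarrow> nat) option" where
  "K2_app \<alpha> \<beta> =
     (if (\<forall>n. \<exists>m. \<alpha> (K2_code \<beta> n m) > 0)
      then Some (\<lambda>n. \<alpha> (K2_code \<beta> n (LEAST m. \<alpha> (K2_code \<beta> n m) > 0)) - 1)
      else None)"

end

theory Submission
  imports Defs
begin

text \<open>Both the singleton of the zero sequence and its complement are domains of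
  K2 application: one waits until the first n entries of the argument were seen to be zero,
  the other for a nonzero entry. Deciding the singleton is impossible, because application
  in K2 is continuous: the value at n only depends on a finite initial segment of the
  argument, which the zero sequence shares with nonzero ones, whereas true and false differ
  in every pca with a K-combinator.\<close>

lemma K2_app_eq_Some_iff:
  "K2_app c \<beta> = Some \<gamma> \<longleftrightarrow>
     (\<forall>n. \<exists>m. 0 < c (K2_code \<beta> n m)) \<and>
     \<gamma> = (\<lambda>n. c (K2_code \<beta> n (LEAST m. 0 < c (K2_code \<beta> n m))) - 1)"
  by (auto simp: K2_app_def)

lemma K2_app_defined_iff: "K2_app c \<beta> \<noteq> None \<longleftrightarrow> (\<forall>n. \<exists>m. 0 < c (K2_code \<beta> n m))"
  by (simp add: K2_app_def)

lemma K2_code_cong: "(\<And>i. i < m \<Longrightarrow> \<beta> i = \<alpha> i) \<Longrightarrow> K2_code \<beta> n m = K2_code \<alpha> n m"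
  unfolding K2_code_def by (simp add: list_encode_eq map_eq_conv)

lemma K2_app_continuous:
  assumes "K2_app c \<alpha> = Some \<gamma>"
  obtains m where "\<And>\<beta> \<delta>. (\<forall>i<m. \<beta> i = \<alpha> i) \<Longrightarrow> K2_app c \<beta> = Some \<delta> \<Longrightarrow> \<delta> n = \<gamma> n"
proof
  define m where "m = (LEAST m. 0 < c (K2_code \<alpha> n m))"
  have defined: "\<forall>n. \<exists>m. 0 < c (K2_code \<alpha> n m)" and
    \<gamma>: "\<gamma> n = c (K2_code \<alpha> n m) - 1"
    using assms by (simp_all add: K2_app_eq_Some_iff m_def)
  have pos: "0 < c (K2_code \<alpha> n m)"
    unfolding m_def using defined by (meson LeastI_ex)
  have below: "\<not> 0 < c (K2_code \<alpha> n m')" if "m' < m" for m'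
    using that not_less_Least unfolding m_def by blast
  fix \<beta> \<delta>
  assume agree: "\<forall>i<m. \<beta> i = \<alpha> i" and \<delta>: "K2_app c \<beta> = Some \<delta>"
  have same_code: "K2_code \<beta> n m' = K2_code \<alpha> n m'" if "m' \<le> m" for m'
    using agree that by (intro K2_code_cong) auto
  have "(LEAST m'. 0 < c (K2_code \<beta> n m')) = m"
  proof (rule Least_equality)
    show "0 < c (K2_code \<beta> n m)" using pos same_code by simp
  next
    show "m \<le> m'" if "0 < c (K2_code \<beta> n m')" for m'
      using that below same_code by (metis le_less_linear less_imp_le_nat)
  qed
  then show "\<delta> n = \<gamma> n"
    using \<delta> \<gamma> same_code[of m] by (simp add: K2_app_eq_Some_iff)
qed

text \<open>Continuity plus the fact that no point of Baire space is isolated.\<close>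

lemma K2_app_constant_off_point:
  assumes "K2_app c \<alpha> = Some \<gamma>" and "\<And>\<beta>. \<beta> \<noteq> \<alpha> \<Longrightarrow> K2_app c \<beta> = Some \<delta>"
  shows "\<gamma> = \<delta>"
proof
  fix n
  obtain m where local:
    "\<And>\<beta> \<delta>'. (\<forall>i<m. \<beta> i = \<alpha> i) \<Longrightarrow> K2_app c \<beta> = Some \<delta>' \<Longrightarrow> \<delta>' n = \<gamma> n"
    using K2_app_continuous[OF assms(1)] by blast
  define \<beta> where "\<beta> = \<alpha>(m := Suc (\<alpha> m))"
  have "\<beta> \<noteq> \<alpha>" by (metis \<beta>_def fun_upd_same n_not_Suc_n)
  moreover have "\<forall>i<m. \<beta> i = \<alpha> i" by (simp add: \<beta>_def)
  ultimately show "\<gamma> n = \<delta> n" using local assms(2) by metis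
qed

text \<open>If k = k i then k b = i for all b, whence i b = a for all a and b.\<close>

lemma pca_true_neq_false:
  fixes app :: "'a \<Rightarrow> 'a \<Rightarrow> 'a option" and x y :: 'a
  assumes "is_K app k" and "x \<noteq> y"
  shows "pca_true app k s \<noteq> pca_false app k s"
proof
  assume eq: "pca_true app k s = pca_false app k s"
  let ?i = "pca_i app k s"
  have K: "\<And>a b. appo app (appo app (Some k) (Some a)) (Some b) = Some a"
    using assms(1) by (simp add: is_K_def)
  have "app k ?i \<noteq> None"
    using K[of ?i x] by (auto simp: appo_def split: option.splits)
  then have "app k ?i = Some k"
    using eq by (auto simp: pca_true_def pca_false_def)
  then have "app k b = Some ?i" for b
    using K[of ?i b] by (simp add: appo_def)
  then have "app ?i x = Some a" for a
    using K[of a x] by (simp add: appo_def)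
  from this[of x] this[of y] show False
    using assms(2) by simp
qed

lemma K2_not_decidable_singleton:
  assumes "is_K K2_app k"
  shows "\<not> pca_decidable K2_app k s {\<alpha>}"
proof
  assume "pca_decidable K2_app k s {\<alpha>}"
  then obtain c where "K2_app c \<alpha> = Some (pca_true K2_app k s)"
    and "\<And>\<beta>. \<beta> \<noteq> \<alpha> \<Longrightarrow> K2_app c \<beta> = Some (pca_false K2_app k s)"
    unfolding pca_decidable_def by blast
  then have "pca_true K2_app k s = pca_false K2_app k s"
    by (rule K2_app_constant_off_point)
  moreover have "pca_true K2_app k s \<noteq> pca_false K2_app k s"
    using assms by (rule pca_true_neq_false[of _ _ "\<lambda>_. 0" "\<lambda>_. 1"]) (simp add: fun_eq_iff)
  ultimately show False by contradiction
qed

definition zero_prefix_enum :: "nat \<Rightarrow> nat" where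
  "zero_prefix_enum x = (case list_decode x of [] \<Rightarrow> 0 | n # xs \<Rightarrow>
     if length xs = n \<and> (\<forall>y\<in>set xs. y = 0) then 1 else 0)"

definition nonzero_entry_enum :: "nat \<Rightarrow> nat" where
  "nonzero_entry_enum x = (case list_decode x of [] \<Rightarrow> 0 | n # xs \<Rightarrow>
     if (\<exists>y\<in>set xs. y \<noteq> 0) then 1 else 0)"

lemma zero_prefix_enum_code:
  "0 < zero_prefix_enum (K2_code \<beta> n m) \<longleftrightarrow> m = n \<and> (\<forall>i<n. \<beta> i = 0)"
  by (auto simp: zero_prefix_enum_def K2_code_def list_encode_inverse)

lemma nonzero_entry_enum_code:
  "0 < nonzero_entry_enum (K2_code \<beta> n m) \<longleftrightarrow> (\<exists>i<m. \<beta> i \<noteq> 0)"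
  by (auto simp: nonzero_entry_enum_def K2_code_def list_encode_inverse)

lemma K2_ce_zero_singleton: "pca_ce K2_app {\<lambda>_. 0}"
  unfolding pca_ce_def
proof (intro exI[of _ zero_prefix_enum] set_eqI)
  have "(\<forall>n. \<forall>i<n. \<beta> i = 0) \<longleftrightarrow> \<beta> = (\<lambda>_. 0)" for \<beta> :: "nat \<Rightarrow> nat"
    by (metis lessI)
  then show "\<beta> \<in> {\<lambda>_. 0} \<longleftrightarrow> \<beta> \<in> {\<beta>. K2_app zero_prefix_enum \<beta> \<noteq> None}" for \<beta>
    unfolding mem_Collect_eq K2_app_defined_iff by (simp add: K2_app_defined_iff zero_prefix_enum_code)
qed

lemma K2_ce_zero_complement: "pca_ce K2_app (- {\<lambda>_. 0})"
  unfolding pca_ce_def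
proof (intro exI[of _ nonzero_entry_enum] set_eqI)
  have "(\<forall>n. \<exists>m i. i < m \<and> \<beta> i \<noteq> 0) \<longleftrightarrow> \<beta> \<noteq> (\<lambda>_. 0)" for \<beta> :: "nat \<Rightarrow> nat"
    by (metis lessI)
  then show "\<beta> \<in> - {\<lambda>_. 0} \<longleftrightarrow> \<beta> \<in> {\<beta>. K2_app nonzero_entry_enum \<beta> \<noteq> None}" for \<beta>
    unfolding mem_Collect_eq K2_app_defined_iff by (simp add: K2_app_defined_iff nonzero_entry_enum_code)
qed

theorem mainTheorem4:
  shows "\<exists>A :: (nat \<Rightarrow> nat) set.
           pca_ce K2_app A \<and> pca_ce K2_app (- A) \<and>
           (\<forall>k s. is_K K2_app k \<longrightarrow> is_S K2_app s \<longrightarrow> \<not> pca_decidable K2_app k s A)"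
  using K2_ce_zero_singleton K2_ce_zero_complement K2_not_decidable_singleton by blast

end
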